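(* Let $a,b,x\ge 0$ be integers and let $(p_m)_{m\ge 2}$ be numbers in $[0,1]$. Suppose the transition probabilities of the constrained walk satisfy $p(r,s)=p_{r+s}$ for all integers $r,s>0$. Then $B(a,b,x)$ equals the probability that an unconstrained walker starting at $(a,b+x+1)$ and taking $a+b+x$ steps ends at one of the $x+1$ points $(-t,1+t)$, $0\le t\le x$, where the unconstrained walker, from any lattice point $(r,s)$ with $r+s\ge 2$, independently moves West (to $(r-1,s)$) with probability $p_{r+s}$ and South (to $(r,s-1)$) with probability $1-p_{r+s}$.
   Context: Constrained walks: let $p(r,s)\in[0,1]$ be given for all integers $r,s>0$. A walker at a lattice point $(r,s)$ with $r,s>0$ moves West to $(r-1,s)$ with probability $p(r,s)$ and South to $(r,s-1)$ with probability $1-p(r,s)$, independently of the past; a walker at a point $(r,0)$ with $r>0$ always moves West, and a walker at $(0,s)$ with $s>0$ always moves South, until the origin is reached. Two walkers $U$ and $L$ start at $(a,b+x+1)$ and $(a+x+1,b)$ respectively and move simultaneously and independently, one step per time unit (both start on the line $X+Y=a+b+x+1$, so at each time they lie on a common antidiagonal). $B(a,b,x)$ is the probability that the first time the two walkers occupy the same lattice point is when they both reach the origin. *)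

theory Defs
  imports "HOL-Probability.Probability"
begin

definition cstep :: "(nat \<Rightarrow> nat \<Rightarrow> real) \<Rightarrow> nat \<times> nat \<Rightarrow> (nat \<times> nat) pmf" where
  "cstep p z = (case z of (r, s) \<Rightarrow>
     if 0 < r \<and> 0 < s then
       map_pmf (\<lambda>w. if w then (r - 1, s) else (r, s - 1)) (bernoulli_pmf (p r s))
     else if 0 < r then return_pmf (r - 1, s)
     else if 0 < s then return_pmf (r, s - 1)
     else return_pmf (0, 0))"

fun ctraj :: "(nat \<Rightarrow> nat \<Rightarrow> real) \<Rightarrow> nat \<Rightarrow> nat \<times> nat \<Rightarrow> (nat \<times> nat) list pmf" where
  "ctraj p 0 z = return_pmf [z]"
| "ctraj p (Suc k) z = bind_pmf (cstep p z) (\<lambda>z'. map_pmf (\<lambda>t. z # t) (ctraj p k z'))"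

text \<open>B(a,b,x): U starts at (a,b+x+1), L at (a+x+1,b), independent; both reach the
  origin after n = a+b+x+1 steps. Event: the first time they occupy the same point,
  that point is the origin.\<close>
definition B :: "(nat \<Rightarrow> nat \<Rightarrow> real) \<Rightarrow> nat \<Rightarrow> nat \<Rightarrow> nat \<Rightarrow> real" where
  "B p a b x = (let n = a + b + x + 1 in
     measure_pmf.prob (pair_pmf (ctraj p n (a, b + x + 1)) (ctraj p n (a + x + 1, b)))
       {(us, ls). \<exists>i\<le>n. us ! i = ls ! i \<and> (\<forall>j<i. us ! j \<noteq> ls ! j) \<and> us ! i = (0, 0)})"

text \<open>One step of the unconstrained walker on the integer lattice: from (r,s)
  West with probability pm (r+s), South otherwise (only used at levels r+s \<ge> 2).\<close>
definition ustep :: "(nat \<Rightarrow> real) \<Rightarrow> int \<times> int \<Rightarrow> (int \<times> int) pmf" where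
  "ustep pm z = (case z of (r, s) \<Rightarrow>
     map_pmf (\<lambda>w. if w then (r - 1, s) else (r, s - 1)) (bernoulli_pmf (pm (nat (r + s)))))"

fun uend :: "(nat \<Rightarrow> real) \<Rightarrow> nat \<Rightarrow> int \<times> int \<Rightarrow> (int \<times> int) pmf" where
  "uend pm 0 z = return_pmf z"
| "uend pm (Suc k) z = bind_pmf (ustep pm z) (uend pm k)"

end

theory Submission
  imports Defs
begin

text \<open>Both walkers lose one level \<open>r + s\<close> per step, so they always share an antidiagonal,
  and since a first coordinate drops by at most one per step they can meet but never cross.
  Let \<open>G\<^sub>k(d)\<close> be the probability that the unconstrained walker moves West fewer than \<open>d\<close>
  times in \<open>k\<close> steps from level \<open>k + 1\<close>. Evaluated at the first coordinate, \<open>G\<close> is a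
  martingale for the constrained walk as well, so the difference \<open>G(L) - G(U)\<close>, which
  vanishes once the walkers meet, equals the probability that they stay apart until the
  last step. At the start this difference is the probability that the unconstrained walker
  from \<open>(a, b + x + 1)\<close> ends with first coordinate in \<open>(-x - 1, 0]\<close>.\<close>

lemma measure_bind_pmf:
  "measure_pmf.prob (bind_pmf M N) X = (\<integral>x. measure_pmf.prob (N x) X \<partial>M)"
proof -
  have "emeasure (measure_pmf (bind_pmf M N)) X = (\<integral>\<^sup>+x. ennreal (measure_pmf.prob (N x) X) \<partial>M)"
    by (subst emeasure_bind_pmf) (simp add: measure_pmf.emeasure_eq_measure)
  also have "\<dots> = ennreal (\<integral>x. measure_pmf.prob (N x) X \<partial>M)"
    by (rule nn_integral_eq_integral)
       (auto intro!: measure_pmf.integrable_const_bound[where B=1])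
  finally show ?thesis
    by (simp add: measure_pmf.emeasure_eq_measure)
qed

lemma pair_pmf_bind_bind:
  "pair_pmf (bind_pmf M f) (bind_pmf N g) = bind_pmf M (\<lambda>a. bind_pmf N (\<lambda>b. pair_pmf (f a) (g b)))"
  unfolding pair_pmf_def bind_assoc_pmf
  by (subst bind_commute_pmf) (simp add: bind_assoc_pmf)

lemma measure_pmf_prob_cong_support:
  assumes "\<And>z. z \<in> set_pmf M \<Longrightarrow> z \<in> X \<longleftrightarrow> z \<in> Y"
  shows "measure_pmf.prob M X = measure_pmf.prob M Y"
  by (rule measure_prob_cong_0) (use assms in \<open>auto simp: set_pmf_iff\<close>)

lemma integral_pmf_const_diff:
  fixes f :: "'a \<Rightarrow> real"
  assumes "finite (set_pmf M)"
  shows "(\<integral>z. c - f z \<partial>M) = c - (\<integral>z. f z \<partial>M)"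
  using assms by (simp add: Bochner_Integration.integral_diff integrable_measure_pmf_finite)

text \<open>\<open>fewer_wests pm k d\<close> is the probability that the unconstrained walker, started on
  level \<open>k + 1\<close>, moves West fewer than \<open>d\<close> times during \<open>k\<close> steps.\<close>
fun fewer_wests :: "(nat \<Rightarrow> real) \<Rightarrow> nat \<Rightarrow> int \<Rightarrow> real" where
  "fewer_wests pm 0 d = (if 0 < d then 1 else 0)"
| "fewer_wests pm (Suc k) d =
     pm (Suc (Suc k)) * fewer_wests pm k (d - 1) + (1 - pm (Suc (Suc k))) * fewer_wests pm k d"

lemma fewer_wests_nonpos: "d \<le> 0 \<Longrightarrow> fewer_wests pm k d = 0"
  by (induction k arbitrary: d) auto

lemma fewer_wests_eq_1: "int k < d \<Longrightarrow> fewer_wests pm k d = 1"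
  by (induction k arbitrary: d) (auto simp: algebra_simps)

lemma uend_level: "z \<in> set_pmf (uend pm k (r, s)) \<Longrightarrow> fst z + snd z = r + s - int k"
  by (induction k arbitrary: r s) (auto simp: ustep_def split: if_splits)

lemma prob_uend_fst_greater:
  assumes pm: "\<forall>m\<ge>2. 0 \<le> pm m \<and> pm m \<le> 1"
  shows "r + s = int k + 1 \<Longrightarrow>
    measure_pmf.prob (uend pm k (r, s)) {z. c < fst z} = fewer_wests pm k (r - c)"
proof (induction k arbitrary: r s)
  case 0
  then show ?case by simp
next
  case (Suc k)
  let ?q = "pm (Suc (Suc k))"
  have "0 \<le> ?q" "?q \<le> 1" using pm by auto
  moreover have "uend pm (Suc k) (r, s) =
      bind_pmf (bernoulli_pmf ?q) (\<lambda>w. uend pm k (if w then (r - 1, s) else (r, s - 1)))"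
    using Suc.prems by (simp add: ustep_def bind_map_pmf o_def nat_add_distrib)
  ultimately show ?case
    using Suc.IH[of "r - 1" s] Suc.IH[of r "s - 1"] Suc.prems
    by (simp add: measure_bind_pmf algebra_simps)
qed

lemma prob_uend_strip:
  assumes pm: "\<forall>m\<ge>2. 0 \<le> pm m \<and> pm m \<le> 1"
  shows "measure_pmf.prob (uend pm (a + b + x) (int a, int (b + x + 1)))
      {(- int t, 1 + int t) | t. t \<le> x}
    = fewer_wests pm (a + b + x) (int (a + x + 1)) - fewer_wests pm (a + b + x) (int a)"
proof -
  let ?M = "uend pm (a + b + x) (int a, int (b + x + 1))"
  let ?A = "{z. - int (x + 1) < fst z}"
  let ?C = "{z. 0 < fst z}"
  have "measure_pmf.prob ?M {(- int t, 1 + int t) | t. t \<le> x} = measure_pmf.prob ?M (?A - ?C)"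
  proof (rule measure_pmf_prob_cong_support)
    fix z assume "z \<in> set_pmf ?M"
    then have "fst z + snd z = 1" by (auto dest: uend_level)
    then show "z \<in> {(- int t, 1 + int t) | t. t \<le> x} \<longleftrightarrow> z \<in> ?A - ?C"
      by (cases z) (auto intro!: exI[of _ "nat (- fst z)"])
  qed
  also have "\<dots> = measure_pmf.prob ?M ?A - measure_pmf.prob ?M ?C"
    by (rule measure_pmf.finite_measure_Diff) auto
  also have "\<dots> = fewer_wests pm (a + b + x) (int (a + x + 1)) - fewer_wests pm (a + b + x) (int a)"
    using prob_uend_fst_greater[OF pm, of "int a" "int (b + x + 1)" "a + b + x" "- int (x + 1)"]
      prob_uend_fst_greater[OF pm, of "int a" "int (b + x + 1)" "a + b + x" 0]
    by (simp add: algebra_simps)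
  finally show ?thesis .
qed

lemma cstep_level:
  "z' \<in> set_pmf (cstep p z) \<Longrightarrow>
    fst z' + snd z' = fst z + snd z - 1 \<and> fst z' \<le> fst z \<and> fst z \<le> fst z' + 1"
  by (auto simp: cstep_def split: if_splits prod.splits)

lemma finite_set_pmf_cstep: "finite (set_pmf (cstep p z))"
  by (auto simp: cstep_def split: prod.splits)

text \<open>In the interior the constrained walker moves like the unconstrained one; on the axes
  its move is forced and \<open>fewer_wests\<close> is \<open>0\<close> resp. \<open>1\<close> before and after it.\<close>
lemma integral_fewer_wests_cstep:
  assumes pm: "\<forall>m\<ge>2. 0 \<le> pm m \<and> pm m \<le> 1"
    and p: "\<forall>r s. 0 < r \<and> 0 < s \<longrightarrow> p r s = pm (r + s)"
    and level: "v + w = Suc (Suc m)"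
  shows "(\<integral>z'. fewer_wests pm m (int (fst z')) \<partial>cstep p (v, w)) = fewer_wests pm (Suc m) (int v)"
proof -
  consider "v = 0" | "w = 0" | "0 < v" "0 < w" by blast
  then show ?thesis
  proof cases
    case 1
    then show ?thesis by (simp add: cstep_def fewer_wests_nonpos del: fewer_wests.simps)
  next
    case 2
    then show ?thesis using level by (simp add: cstep_def fewer_wests_eq_1 del: fewer_wests.simps)
  next
    case 3
    have "p v w = pm (Suc (Suc m))" using p 3 level by auto
    moreover have "0 \<le> pm (Suc (Suc m))" "pm (Suc (Suc m)) \<le> 1" using pm by auto
    ultimately show ?thesis using 3 by (simp add: cstep_def of_nat_diff)
  qed
qed

lemma ctraj_level:
  "us \<in> set_pmf (ctraj p k z) \<Longrightarrow>
    length us = Suc k \<and> (\<forall>i\<le>k. fst (us ! i) + snd (us ! i) = fst z + snd z - i)"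
proof (induction k arbitrary: us z)
  case 0
  then show ?case by simp
next
  case (Suc k)
  then obtain z' us' where z': "z' \<in> set_pmf (cstep p z)" and us': "us' \<in> set_pmf (ctraj p k z')"
    and us: "us = z # us'" by auto
  have "fst z' + snd z' = fst z + snd z - 1"
    using cstep_level[OF z'] by simp
  then show ?case
    using Suc.IH[OF us'] us by (auto simp: nth_Cons' diff_Suc split: nat.splits)
qed

definition apart_prob :: "(nat \<Rightarrow> nat \<Rightarrow> real) \<Rightarrow> nat \<Rightarrow> nat \<times> nat \<Rightarrow> nat \<times> nat \<Rightarrow> real" where
  "apart_prob p k zU zL = measure_pmf.prob (pair_pmf (ctraj p k zU) (ctraj p k zL))
     {(us, ls). \<forall>j<k. us ! j \<noteq> ls ! j}"

lemma apart_prob_0 [simp]: "apart_prob p 0 = (\<lambda>_ _. 1)"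
  by (simp add: apart_prob_def fun_eq_iff)

lemma apart_prob_Suc:
  "apart_prob p (Suc k) zU zL =
    (if zU = zL then 0 else \<integral>u'. (\<integral>l'. apart_prob p k u' l' \<partial>cstep p zL) \<partial>cstep p zU)"
proof -
  have "(\<lambda>(us, ls). (zU # us, zL # ls)) -` {(us, ls). \<forall>j<Suc k. us ! j \<noteq> ls ! j}
      = (if zU = zL then {} else {(us, ls). \<forall>j<k. us ! j \<noteq> ls ! j})"
    by (auto simp: All_less_Suc2)
  then have "measure_pmf.prob (pair_pmf (map_pmf ((#) zU) (ctraj p k u')) (map_pmf ((#) zL) (ctraj p k l')))
      {(us, ls). \<forall>j<Suc k. us ! j \<noteq> ls ! j} = (if zU = zL then 0 else apart_prob p k u' l')" for u' l'
    unfolding map_pair[symmetric] measure_map_pmf apart_prob_def by simp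
  then show ?thesis
    unfolding apart_prob_def[of p "Suc k"] ctraj.simps pair_pmf_bind_bind measure_bind_pmf
    by (simp add: apart_prob_def)
qed

lemma apart_prob_eq_fewer_wests:
  assumes pm: "\<forall>m\<ge>2. 0 \<le> pm m \<and> pm m \<le> 1"
    and p: "\<forall>r s. 0 < r \<and> 0 < s \<longrightarrow> p r s = pm (r + s)"
  shows "fst zU + snd zU = Suc m \<Longrightarrow> fst zL + snd zL = Suc m \<Longrightarrow> fst zU \<le> fst zL \<Longrightarrow>
    apart_prob p (Suc m) zU zL = fewer_wests pm m (int (fst zL)) - fewer_wests pm m (int (fst zU))"
proof (induction m arbitrary: zU zL)
  case 0
  then show ?case
    by (cases "zU = zL") (auto simp: apart_prob_Suc prod_eq_iff)
next
  case (Suc m)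
  let ?G = "fewer_wests pm"
  show ?case
  proof (cases "zU = zL")
    case True
    then show ?thesis by (simp add: apart_prob_Suc)
  next
    case False
    with Suc.prems have "fst zU < fst zL" by (auto simp: prod_eq_iff)
    have IH: "apart_prob p (Suc m) u' l' = ?G m (int (fst l')) - ?G m (int (fst u'))"
      if "u' \<in> set_pmf (cstep p zU)" "l' \<in> set_pmf (cstep p zL)" for u' l'
      using Suc.IH Suc.prems \<open>fst zU < fst zL\<close> cstep_level[OF that(1)] cstep_level[OF that(2)]
      by simp
    have "apart_prob p (Suc (Suc m)) zU zL
        = (\<integral>u'. (\<integral>l'. apart_prob p (Suc m) u' l' \<partial>cstep p zL) \<partial>cstep p zU)"
      using False by (subst apart_prob_Suc) simp
    also have "\<dots> = (\<integral>u'. (\<integral>l'. ?G m (int (fst l')) - ?G m (int (fst u')) \<partial>cstep p zL) \<partial>cstep p zU)"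
      by (auto simp: AE_measure_pmf_iff IH intro!: integral_cong_AE)
    also have "\<dots> = (\<integral>u'. ?G (Suc m) (int (fst zL)) - ?G m (int (fst u')) \<partial>cstep p zU)"
      using integral_fewer_wests_cstep[OF pm p, of "fst zL" "snd zL" m] Suc.prems
      by (simp add: Bochner_Integration.integral_diff integrable_measure_pmf_finite finite_set_pmf_cstep)
    also have "\<dots> = ?G (Suc m) (int (fst zL)) - ?G (Suc m) (int (fst zU))"
      using integral_fewer_wests_cstep[OF pm p, of "fst zU" "snd zU" m] Suc.prems
      by (simp add: integral_pmf_const_diff finite_set_pmf_cstep)
    finally show ?thesis .
  qed
qed

text \<open>At time \<open>i\<close> both walkers are on level \<open>n - i\<close>, so they can be at the origin only
  at the final time \<open>n\<close>, where they certainly are.\<close>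
lemma B_eq_apart_prob: "B p a b x = apart_prob p (a + b + x + 1) (a, b + x + 1) (a + x + 1, b)"
proof -
  define n where "n = a + b + x + 1"
  let ?M = "pair_pmf (ctraj p n (a, b + x + 1)) (ctraj p n (a + x + 1, b))"
  have "measure_pmf.prob ?M
      {(us, ls). \<exists>i\<le>n. us ! i = ls ! i \<and> (\<forall>j<i. us ! j \<noteq> ls ! j) \<and> us ! i = (0, 0)}
    = measure_pmf.prob ?M {(us, ls). \<forall>j<n. us ! j \<noteq> ls ! j}"
  proof (rule measure_pmf_prob_cong_support)
    fix w assume "w \<in> set_pmf ?M"
    moreover obtain us ls where w: "w = (us, ls)" by (cases w)
    ultimately have "us \<in> set_pmf (ctraj p n (a, b + x + 1))" "ls \<in> set_pmf (ctraj p n (a + x + 1, b))"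
      by auto
    moreover have "a + (b + x + 1) = n" "a + x + 1 + b = n"
      by (simp_all add: n_def)
    ultimately have us: "\<forall>i\<le>n. fst (us ! i) + snd (us ! i) = n - i"
      and ls: "\<forall>i\<le>n. fst (ls ! i) + snd (ls ! i) = n - i"
      using ctraj_level by auto
    have origin: "us ! i = (0, 0) \<longleftrightarrow> i = n" if "i \<le> n" for i
      using us that by (auto simp: prod_eq_iff add_is_0 [symmetric])
    have "ls ! n = (0, 0)"
      using ls by (simp add: prod_eq_iff add_is_0 [symmetric])
    then show "w \<in> {(us, ls). \<exists>i\<le>n. us ! i = ls ! i \<and> (\<forall>j<i. us ! j \<noteq> ls ! j) \<and> us ! i = (0, 0)}
      \<longleftrightarrow> w \<in> {(us, ls). \<forall>j<n. us ! j \<noteq> ls ! j}"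
      using origin w by auto
  qed
  then show ?thesis
    unfolding B_def apart_prob_def Let_def n_def by simp
qed

theorem theorem4:
  fixes a b x :: nat and pm :: "nat \<Rightarrow> real" and p :: "nat \<Rightarrow> nat \<Rightarrow> real"
  assumes "\<forall>m\<ge>2. 0 \<le> pm m \<and> pm m \<le> 1"
    and "\<forall>r s. 0 < r \<and> 0 < s \<longrightarrow> p r s = pm (r + s)"
  shows "B p a b x =
    measure_pmf.prob (uend pm (a + b + x) (int a, int (b + x + 1)))
      {(- int t, 1 + int t) | t. t \<le> x}"
proof -
  have "B p a b x = apart_prob p (Suc (a + b + x)) (a, b + x + 1) (a + x + 1, b)"
    by (simp add: B_eq_apart_prob)
  also have "\<dots> = fewer_wests pm (a + b + x) (int (a + x + 1)) - fewer_wests pm (a + b + x) (int a)"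
    using apart_prob_eq_fewer_wests[OF assms, of "(a, b + x + 1)" "a + b + x" "(a + x + 1, b)"]
    by simp
  also have "\<dots> = measure_pmf.prob (uend pm (a + b + x) (int a, int (b + x + 1)))
      {(- int t, 1 + int t) | t. t \<le> x}"
    by (rule prob_uend_strip[OF assms(1), symmetric])
  finally show ?thesis .
qed

end
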